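(* Let $\mathcal{C}$ be a small category in which no composite of non-identity morphisms is an identity, and let $M$ be a $k\mathcal{C}$-module such that $[M]$ is a $0$-cocycle in $\mathsf{E}^0(\mathcal{C},k)$, i.e. $\partial_0^*M\cong\partial_1^*M$ as $k\mathcal{E}^{\mathcal{C}}_1$-modules. Then for every square-component $\mathcal{M}$ of $\mathcal{C}$ containing at least two distinct (non-identity) morphisms, $M(u)$ is an isomorphism for every $u\in\mathcal{M}$.
   Context: A $k\mathcal{C}$-module is a functor from $\mathcal{C}$ to finite-dimensional $k$-vector spaces ($k$ a field); $F^*M=M\circ F$. $\mathcal{E}^{\mathcal{C}}_1$ is the category whose objects are the non-identity morphisms $u:a\to b$ of $\mathcal{C}$ (written $[u]$), and whose morphisms $[u]\to[v]$ (with $v:c\to d$) are pairs $(f_0,f_1)$, $f_0:a\to c$, $f_1:b\to d$, with $f_1u=vf_0$. The functors $\partial_0,\partial_1:\mathcal{E}^{\mathcal{C}}_1\to\mathcal{C}$ are $\partial_0[u]=b$, $\partial_0(f_0,f_1)=f_1$ and $\partial_1[u]=a$, $\partial_1(f_0,f_1)=f_0$. (This is the degree-1 part of the semi-simplicial object $\mathcal{E}^{\mathcal{C}}_\bullet$ of non-degenerate strings, whose degree-0 part is $\mathcal{C}$; $\mathsf{E}^0(\mathcal{C},k)$ is the kernel of $d^0=\partial_0^*-\partial_1^*$ on the split Grothendieck group of $k\mathcal{C}$-modules.) A set of non-identity morphisms of $\mathcal{C}$ is a square-component if the full subcategory of $\mathcal{E}^{\mathcal{C}}_1$ on it is a connected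 component of $\mathcal{E}^{\mathcal{C}}_1$. *)

theory Defs
  imports "Jordan_Normal_Form.Matrix"
begin

text \<open>A small category: a set of objects, a set of morphisms, domain/codomain maps,
  identities, and composition (comp g f = g after f, defined when Cod f = Dom g).\<close>

record ('o, 'm) cat =
  Obj :: "'o set"
  Mor :: "'m set"
  Dom :: "'m \<Rightarrow> 'o"
  Cod :: "'m \<Rightarrow> 'o"
  Id  :: "'o \<Rightarrow> 'm"
  comp :: "'m \<Rightarrow> 'm \<Rightarrow> 'm"

definition category :: "('o, 'm) cat \<Rightarrow> bool" where
  "category C \<longleftrightarrow>
     (\<forall>f\<in>Mor C. Dom C f \<in> Obj C \<and> Cod C f \<in> Obj C) \<and>
     (\<forall>a\<in>Obj C. Id C a \<in> Mor C \<and> Dom C (Id C a) = a \<and> Cod C (Id C a) = a) \<and>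
     (\<forall>f\<in>Mor C. \<forall>g\<in>Mor C. Cod C f = Dom C g \<longrightarrow>
        comp C g f \<in> Mor C \<and> Dom C (comp C g f) = Dom C f \<and> Cod C (comp C g f) = Cod C g) \<and>
     (\<forall>f\<in>Mor C. comp C (Id C (Cod C f)) f = f \<and> comp C f (Id C (Dom C f)) = f) \<and>
     (\<forall>f\<in>Mor C. \<forall>g\<in>Mor C. \<forall>h\<in>Mor C. Cod C f = Dom C g \<longrightarrow> Cod C g = Dom C h \<longrightarrow>
        comp C h (comp C g f) = comp C (comp C h g) f)"

text \<open>Non-identity morphisms (the objects [u] of E_1^C).\<close>
definition nonid :: "('o, 'm) cat \<Rightarrow> 'm set" where
  "nonid C = {u \<in> Mor C. u \<noteq> Id C (Dom C u)}"

definition no_id_composites :: "('o, 'm) cat \<Rightarrow> bool" where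
  "no_id_composites C \<longleftrightarrow>
     (\<forall>f\<in>nonid C. \<forall>g\<in>nonid C. Cod C f = Dom C g \<longrightarrow> comp C g f \<noteq> Id C (Dom C f))"

definition E1_hom :: "('o, 'm) cat \<Rightarrow> 'm \<Rightarrow> 'm \<Rightarrow> ('m \<times> 'm) set" where
  "E1_hom C u v = {(f0, f1). f0 \<in> Mor C \<and> f1 \<in> Mor C \<and>
      Dom C f0 = Dom C u \<and> Cod C f0 = Dom C v \<and>
      Dom C f1 = Cod C u \<and> Cod C f1 = Cod C v \<and>
      comp C f1 u = comp C v f0}"

text \<open>A kC-module (functor to finite-dimensional k-vector spaces), presented up to
  isomorphism: object a goes to k^(n a), morphism f goes to an (n (Cod f)) x (n (Dom f)) matrix.\<close>
definition kmodule :: "('o, 'm) cat \<Rightarrow> ('o \<Rightarrow> nat) \<Rightarrow> ('m \<Rightarrow> 'k::field mat) \<Rightarrow> bool" where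
  "kmodule C n M \<longleftrightarrow>
     (\<forall>f\<in>Mor C. M f \<in> carrier_mat (n (Cod C f)) (n (Dom C f))) \<and>
     (\<forall>a\<in>Obj C. M (Id C a) = 1\<^sub>m (n a)) \<and>
     (\<forall>f\<in>Mor C. \<forall>g\<in>Mor C. Cod C f = Dom C g \<longrightarrow> M (comp C g f) = M g * M f)"

text \<open>partial_0^* M \<cong> partial_1^* M as kE_1^C-modules: a natural isomorphism
  phi_[u] : M(Cod u) \<rightarrow> M(Dom u), natural in morphisms (f0,f1) of E_1^C.\<close>
definition d0_d1_iso :: "('o, 'm) cat \<Rightarrow> ('o \<Rightarrow> nat) \<Rightarrow> ('m \<Rightarrow> 'k::field mat) \<Rightarrow> bool" where
  "d0_d1_iso C n M \<longleftrightarrow>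
     (\<exists>phi :: 'm \<Rightarrow> 'k mat.
        (\<forall>u\<in>nonid C. phi u \<in> carrier_mat (n (Dom C u)) (n (Cod C u)) \<and> invertible_mat (phi u)) \<and>
        (\<forall>u\<in>nonid C. \<forall>v\<in>nonid C. \<forall>(f0, f1)\<in>E1_hom C u v.
            phi v * M f1 = M f0 * phi u))"

text \<open>Connectedness in E_1^C: the equivalence relation generated by the existence of a morphism.\<close>
definition E1_rel :: "('o, 'm) cat \<Rightarrow> ('m \<times> 'm) set" where
  "E1_rel C = {(u, v). u \<in> nonid C \<and> v \<in> nonid C \<and> E1_hom C u v \<noteq> {}}"

definition square_component :: "('o, 'm) cat \<Rightarrow> 'm set \<Rightarrow> bool" where
  "square_component C S \<longleftrightarrow>
     (\<exists>u\<in>nonid C. S = {v. (u, v) \<in> (E1_rel C \<union> (E1_rel C)\<inverse>)\<^sup>*})"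

end

theory Submission
  imports Defs "Jordan_Normal_Form.Determinant"
begin

text \<open>Let \<open>\<phi> : \<partial>\<^sub>0\<^sup>*M \<cong> \<partial>\<^sub>1\<^sup>*M\<close>. For a morphism \<open>(f\<^sub>0, f\<^sub>1) : [u] \<rightarrow> [v]\<close> of
  \<open>\<E>\<^sub>1\<close>, naturality \<open>\<phi>\<^sub>v M(f\<^sub>1) = M(f\<^sub>0) \<phi>\<^sub>u\<close> shows that \<open>M(f\<^sub>0)\<close> is invertible iff \<open>M(f\<^sub>1)\<close> is
  (each \<open>\<phi>\<^sub>u\<close> is square, so all matrices involved have one common size).
  If \<open>f, g\<close> are composable non-identities, then \<open>g f\<close> is again a non-identity, and the
  morphisms \<open>(id, g) : [f] \<rightarrow> [g f]\<close> and \<open>(f, id) : [g f] \<rightarrow> [g]\<close> compare \<open>M(g)\<close> and \<open>M(f)\<close>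
  with an identity, so both are invertible. Finally, in a connected component with two
  elements every \<open>u\<close> has a neighbour \<open>v \<noteq> u\<close>, and then \<open>u\<close> is either composable with a
  non-identity or a composite \<open>g f\<close> of two composable non-identities.\<close>

lemma invertible_mat_iff_det:
  fixes A :: "'k::field mat"
  assumes A: "A \<in> carrier_mat m m"
  shows "invertible_mat A \<longleftrightarrow> det A \<noteq> 0"
proof
  assume "invertible_mat A"
  then obtain B where AB: "A * B = 1\<^sub>m m" and BA: "B * A = 1\<^sub>m (dim_row B)"
    using A unfolding invertible_mat_def inverts_mat_def by auto
  have "B \<in> carrier_mat m m"
    using arg_cong[OF AB, of dim_col] arg_cong[OF BA, of dim_col] A by auto
  then show "det A \<noteq> 0"
    using arg_cong[OF AB, of det] det_mult[OF A] by auto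
next
  assume "det A \<noteq> 0"
  then obtain B where "B \<in> carrier_mat m m" "B * A = 1\<^sub>m m" "A * B = 1\<^sub>m m"
    using det_non_zero_imp_unit[OF A, of "()"] unfolding Units_def ring_mat_def by auto
  then show "invertible_mat A"
    using A unfolding invertible_mat_def inverts_mat_def square_mat.simps by auto
qed

lemma invertible_mat_mult:
  fixes A B :: "'k::field mat"
  assumes "A \<in> carrier_mat m m" "B \<in> carrier_mat m m" "invertible_mat A" "invertible_mat B"
  shows "invertible_mat (A * B)"
proof -
  have "A * B \<in> carrier_mat m m"
    using assms by simp
  then show ?thesis
    using assms by (simp add: invertible_mat_iff_det[of _ m] det_mult[of _ m])
qed

lemma invertible_mat_iff_of_mult_eq:
  fixes A B C D :: "'k::field mat"
  assumes carrier: "A \<in> carrier_mat m m" "B \<in> carrier_mat m m" "C \<in> carrier_mat m m"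
      "D \<in> carrier_mat m m"
    and "invertible_mat A" "invertible_mat D" and "A * B = C * D"
  shows "invertible_mat B \<longleftrightarrow> invertible_mat C"
proof -
  have "det A * det B = det C * det D"
    using arg_cong[OF \<open>A * B = C * D\<close>, of det]
    by (simp add: det_mult[OF carrier(1,2)] det_mult[OF carrier(3,4)])
  moreover have "det A \<noteq> 0" "det D \<noteq> 0"
    using assms by (simp_all add: invertible_mat_iff_det)
  ultimately show ?thesis
    using carrier by (auto simp: invertible_mat_iff_det)
qed

lemma rtrancl_exists_step_neq:
  assumes "(a, x) \<in> r\<^sup>*" and "a \<noteq> x"
  shows "\<exists>y. (a, y) \<in> r \<and> y \<noteq> a"
  using assms by (induction rule: converse_rtrancl_induct) auto

lemma square_component_connected:
  assumes "square_component C S" and "u \<in> S" and "v \<in> S"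
  shows "(u, v) \<in> (E1_rel C \<union> (E1_rel C)\<inverse>)\<^sup>*"
proof -
  let ?R = "E1_rel C \<union> (E1_rel C)\<inverse>"
  obtain u0 where S: "S = {v. (u0, v) \<in> ?R\<^sup>*}"
    using assms(1) unfolding square_component_def by blast
  have "sym (?R\<^sup>*)"
    by (simp add: sym_Un_converse sym_rtrancl)
  then show ?thesis
    using assms(2,3) S by (blast dest: symD intro: rtrancl_trans)
qed

locale cocycle_module =
  fixes C :: "('o, 'm) cat" and n :: "'o \<Rightarrow> nat" and M :: "'m \<Rightarrow> 'k::field mat"
  assumes category: "category C"
    and kmodule: "kmodule C n M"
    and d0_d1_iso: "d0_d1_iso C n M"
begin

lemma Dom_Cod_closed: "f \<in> Mor C \<Longrightarrow> Dom C f \<in> Obj C \<and> Cod C f \<in> Obj C"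
  using category unfolding category_def by blast

lemma Id_closed [simp]:
  "a \<in> Obj C \<Longrightarrow> Id C a \<in> Mor C" "a \<in> Obj C \<Longrightarrow> Dom C (Id C a) = a"
  "a \<in> Obj C \<Longrightarrow> Cod C (Id C a) = a"
  using category unfolding category_def by blast+

lemma comp_closed:
  "f \<in> Mor C \<Longrightarrow> g \<in> Mor C \<Longrightarrow> Cod C f = Dom C g \<Longrightarrow>
     comp C g f \<in> Mor C \<and> Dom C (comp C g f) = Dom C f \<and> Cod C (comp C g f) = Cod C g"
  using category unfolding category_def by blast

lemma comp_Id [simp]:
  "f \<in> Mor C \<Longrightarrow> comp C (Id C (Cod C f)) f = f" "f \<in> Mor C \<Longrightarrow> comp C f (Id C (Dom C f)) = f"
  using category unfolding category_def by blast+

lemma not_nonid_eq_Id: "f \<in> Mor C \<Longrightarrow> f \<notin> nonid C \<Longrightarrow> Dom C f = a \<Longrightarrow> f = Id C a"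
  unfolding nonid_def by auto

lemma M_carrier: "f \<in> Mor C \<Longrightarrow> M f \<in> carrier_mat (n (Cod C f)) (n (Dom C f))"
  using kmodule unfolding kmodule_def by blast

lemma M_Id [simp]: "a \<in> Obj C \<Longrightarrow> M (Id C a) = 1\<^sub>m (n a)"
  using kmodule unfolding kmodule_def by blast

lemma M_comp:
  "f \<in> Mor C \<Longrightarrow> g \<in> Mor C \<Longrightarrow> Cod C f = Dom C g \<Longrightarrow> M (comp C g f) = M g * M f"
  using kmodule unfolding kmodule_def by blast

lemma invertible_M_Id: "a \<in> Obj C \<Longrightarrow> invertible_mat (M (Id C a))"
  by (simp add: invertible_mat_iff_det[of _ "n a"])

lemma d0_d1_isoE:
  obtains phi :: "'m \<Rightarrow> 'k mat" where
    "\<And>w. w \<in> nonid C \<Longrightarrow> phi w \<in> carrier_mat (n (Dom C w)) (n (Cod C w))"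
    "\<And>w. w \<in> nonid C \<Longrightarrow> invertible_mat (phi w)"
    "\<And>u v f0 f1. u \<in> nonid C \<Longrightarrow> v \<in> nonid C \<Longrightarrow> (f0, f1) \<in> E1_hom C u v \<Longrightarrow>
      phi v * M f1 = M f0 * phi u"
proof -
  obtain phi :: "'m \<Rightarrow> 'k mat" where
    iso: "\<forall>w\<in>nonid C. phi w \<in> carrier_mat (n (Dom C w)) (n (Cod C w)) \<and> invertible_mat (phi w)"
    and natural: "\<forall>u\<in>nonid C. \<forall>v\<in>nonid C. \<forall>(f0, f1)\<in>E1_hom C u v. phi v * M f1 = M f0 * phi u"
    using d0_d1_iso unfolding d0_d1_iso_def by (elim exE conjE)
  show thesis
  proof (rule that)
    show "phi v * M f1 = M f0 * phi u"
      if "u \<in> nonid C" "v \<in> nonid C" "(f0, f1) \<in> E1_hom C u v" for u v f0 f1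
      using natural that by fastforce
  qed (use iso in simp_all)
qed

lemma dim_Dom_eq_dim_Cod:
  assumes "f \<in> Mor C"
  shows "n (Dom C f) = n (Cod C f)"
proof (cases "f \<in> nonid C")
  case True
  obtain phi :: "'m \<Rightarrow> 'k mat" where
    "phi f \<in> carrier_mat (n (Dom C f)) (n (Cod C f))" "invertible_mat (phi f)"
    using d0_d1_isoE True by metis
  then show ?thesis
    unfolding invertible_mat_def square_mat.simps by auto
next
  case False
  then show ?thesis
    using not_nonid_eq_Id[OF assms False refl] Id_closed(3) Dom_Cod_closed[OF assms] by metis
qed

lemma M_square: "f \<in> Mor C \<Longrightarrow> M f \<in> carrier_mat (n (Dom C f)) (n (Dom C f))"
  using M_carrier[of f] dim_Dom_eq_dim_Cod[of f] by simp

lemma E1_hom_invertible_iff: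
  assumes u: "u \<in> nonid C" and v: "v \<in> nonid C" and f: "(f0, f1) \<in> E1_hom C u v"
  shows "invertible_mat (M f0) \<longleftrightarrow> invertible_mat (M f1)"
proof -
  obtain phi :: "'m \<Rightarrow> 'k mat" where
    phi: "\<And>w. w \<in> nonid C \<Longrightarrow> phi w \<in> carrier_mat (n (Dom C w)) (n (Cod C w))"
      "\<And>w. w \<in> nonid C \<Longrightarrow> invertible_mat (phi w)"
    and natural: "phi v * M f1 = M f0 * phi u"
    using d0_d1_isoE u v f by metis
  have mor: "u \<in> Mor C" "v \<in> Mor C" "f0 \<in> Mor C" "f1 \<in> Mor C"
    and ends: "Dom C f0 = Dom C u" "Cod C f0 = Dom C v" "Dom C f1 = Cod C u" "Cod C f1 = Cod C v"
    using u v f unfolding nonid_def E1_hom_def by auto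
  let ?N = "n (Dom C u)"
  have dims: "n (Cod C u) = ?N" "n (Dom C v) = ?N" "n (Cod C v) = ?N"
    using dim_Dom_eq_dim_Cod[OF mor(1)] dim_Dom_eq_dim_Cod[OF mor(2)]
      dim_Dom_eq_dim_Cod[OF mor(3)] ends by simp_all
  have "phi v \<in> carrier_mat ?N ?N" "M f1 \<in> carrier_mat ?N ?N" "M f0 \<in> carrier_mat ?N ?N"
      "phi u \<in> carrier_mat ?N ?N"
    using phi(1)[OF u] phi(1)[OF v] M_square[OF mor(4)] M_square[OF mor(3)] ends dims by auto
  then show ?thesis
    using invertible_mat_iff_of_mult_eq[OF _ _ _ _ _ _ natural] phi(2)[OF u] phi(2)[OF v] by blast
qed

lemma comp_nonid:
  assumes "no_id_composites C" and f: "f \<in> nonid C" and g: "g \<in> nonid C"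
    and fg: "Cod C f = Dom C g"
  shows "comp C g f \<in> nonid C"
  using assms comp_closed[OF _ _ fg] unfolding no_id_composites_def nonid_def by auto

lemma composable_nonid_invertible:
  assumes no_id: "no_id_composites C" and f: "f \<in> nonid C" and g: "g \<in> nonid C"
    and fg: "Cod C f = Dom C g"
  shows "invertible_mat (M f)" and "invertible_mat (M g)"
proof -
  let ?w = "comp C g f"
  have w: "?w \<in> nonid C"
    using comp_nonid[OF no_id f g fg] .
  have mor: "f \<in> Mor C" "g \<in> Mor C"
    using f g unfolding nonid_def by auto
  have obj: "Dom C f \<in> Obj C" "Cod C g \<in> Obj C"
    using Dom_Cod_closed mor by auto
  have w_mor: "?w \<in> Mor C" and w_ends: "Dom C ?w = Dom C f" "Cod C ?w = Cod C g"
    using comp_closed[OF mor fg] by auto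
  have "comp C (Id C (Cod C g)) ?w = ?w"
    using comp_Id(1)[OF w_mor] w_ends by simp
  then have "(f, Id C (Cod C g)) \<in> E1_hom C ?w g"
    using mor obj fg w_ends unfolding E1_hom_def by auto
  then show "invertible_mat (M f)"
    using E1_hom_invertible_iff[OF w g] invertible_M_Id[OF obj(2)] by blast
  have "comp C ?w (Id C (Dom C f)) = ?w"
    using comp_Id(2)[OF w_mor] w_ends by simp
  then have "(Id C (Dom C f), g) \<in> E1_hom C f ?w"
    using mor obj fg w_ends unfolding E1_hom_def by auto
  then show "invertible_mat (M g)"
    using E1_hom_invertible_iff[OF f w] invertible_M_Id[OF obj(1)] by blast
qed

lemma comp_composable_nonid_invertible:
  assumes "no_id_composites C" and f: "f \<in> nonid C" and g: "g \<in> nonid C"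
    and fg: "Cod C f = Dom C g"
  shows "invertible_mat (M (comp C g f))"
proof -
  have mor: "f \<in> Mor C" "g \<in> Mor C"
    using f g unfolding nonid_def by auto
  have "M f \<in> carrier_mat (n (Dom C f)) (n (Dom C f))" "M g \<in> carrier_mat (n (Dom C f)) (n (Dom C f))"
    using M_square mor fg dim_Dom_eq_dim_Cod by metis+
  then show ?thesis
    using M_comp[OF mor fg] invertible_mat_mult composable_nonid_invertible[OF assms] by metis
qed

lemma E1_neighbour_cases:
  assumes u: "u \<in> nonid C" and uv: "(u, v) \<in> E1_rel C \<union> (E1_rel C)\<inverse>" and "v \<noteq> u"
  obtains g where "g \<in> nonid C" "Cod C u = Dom C g"
  | f where "f \<in> nonid C" "Cod C f = Dom C u"
  | f g where "f \<in> nonid C" "g \<in> nonid C" "Cod C f = Dom C g" "u = comp C g f"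
proof -
  have v: "v \<in> nonid C"
    using uv unfolding E1_rel_def by auto
  have mor: "u \<in> Mor C" "v \<in> Mor C"
    using u v unfolding nonid_def by auto
  have obj: "Dom C u \<in> Obj C" "Dom C v \<in> Obj C"
    using Dom_Cod_closed mor by auto
  from uv consider "(u, v) \<in> E1_rel C" | "(v, u) \<in> E1_rel C"
    by blast
  then show thesis
  proof cases
    case 1
    then obtain f0 f1 where "(f0, f1) \<in> E1_hom C u v"
      unfolding E1_rel_def by auto
    then have f: "f0 \<in> Mor C" "f1 \<in> Mor C" "Dom C f0 = Dom C u" "Cod C f0 = Dom C v"
      "Dom C f1 = Cod C u" "comp C f1 u = comp C v f0"
      unfolding E1_hom_def by auto
    show thesis
    proof (cases "f1 \<in> nonid C")
      case True
      then show thesis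
        using that(1) f(5) by simp
    next
      case False
      then have "f1 = Id C (Cod C u)"
        using not_nonid_eq_Id[OF f(2) _ f(5)] by blast
      then have u_eq: "u = comp C v f0"
        using f(6) comp_Id(1)[OF mor(1)] by simp
      have "f0 \<in> nonid C"
      proof (rule ccontr)
        assume "f0 \<notin> nonid C"
        then have "f0 = Id C (Dom C u)"
          using not_nonid_eq_Id[OF f(1) _ f(3)] by blast
        moreover have "Dom C v = Dom C u"
          using f(4) obj(1) calculation by simp
        ultimately have "comp C v f0 = v"
          using comp_Id(2)[OF mor(2)] by simp
        then show False
          using u_eq \<open>v \<noteq> u\<close> by simp
      qed
      then show thesis
        by (rule that(3)[OF _ v f(4) u_eq])
    qed
  next
    case 2
    then obtain f0 f1 where "(f0, f1) \<in> E1_hom C v u"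
      unfolding E1_rel_def by auto
    then have f: "f0 \<in> Mor C" "f1 \<in> Mor C" "Dom C f0 = Dom C v" "Cod C f0 = Dom C u"
      "Dom C f1 = Cod C v" "comp C f1 v = comp C u f0"
      unfolding E1_hom_def by auto
    show thesis
    proof (cases "f0 \<in> nonid C")
      case True
      then show thesis
        using that(2) f(4) by simp
    next
      case False
      then have "f0 = Id C (Dom C v)"
        using not_nonid_eq_Id[OF f(1) _ f(3)] by blast
      moreover have "Dom C u = Dom C v"
        using f(4) obj(2) calculation by simp
      ultimately have u_eq: "u = comp C f1 v"
        using f(6) comp_Id(2)[OF mor(1)] by simp
      have "f1 \<in> nonid C"
      proof (rule ccontr)
        assume "f1 \<notin> nonid C"
        then have "f1 = Id C (Cod C v)"
          using not_nonid_eq_Id[OF f(2) _ f(5)] by blast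
        then have "comp C f1 v = v"
          using comp_Id(1)[OF mor(2)] by simp
        then show False
          using u_eq \<open>v \<noteq> u\<close> by simp
      qed
      then show thesis
        by (rule that(3)[OF v _ f(5)[symmetric] u_eq])
    qed
  qed
qed

end

theorem proposition4p1:
  fixes C :: "('o, 'm) cat" and n :: "'o \<Rightarrow> nat" and M :: "'m \<Rightarrow> 'k::field mat"
    and S :: "'m set"
  assumes "category C"
    and "no_id_composites C"
    and "kmodule C n M"
    and "d0_d1_iso C n M"
    and "square_component C S"
    and "\<exists>u\<in>S. \<exists>v\<in>S. u \<noteq> v"
  shows "\<forall>u\<in>S. invertible_mat (M u)"
proof
  interpret cocycle_module C n M
    using assms(1,3,4) by unfold_locales
  fix u assume "u \<in> S"
  then obtain x where "x \<in> S" "x \<noteq> u"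
    using assms(6) by blast
  then obtain v where uv: "(u, v) \<in> E1_rel C \<union> (E1_rel C)\<inverse>" and "v \<noteq> u"
    using rtrancl_exists_step_neq square_component_connected[OF assms(5) \<open>u \<in> S\<close>] by metis
  have u: "u \<in> nonid C"
    using uv unfolding E1_rel_def by auto
  from u uv \<open>v \<noteq> u\<close> show "invertible_mat (M u)"
  proof (rule E1_neighbour_cases)
    fix g assume "g \<in> nonid C" "Cod C u = Dom C g"
    then show ?thesis
      using composable_nonid_invertible(1)[OF assms(2) u] by blast
  next
    fix f assume "f \<in> nonid C" "Cod C f = Dom C u"
    then show ?thesis
      using composable_nonid_invertible(2)[OF assms(2) _ u] by blast
  next
    fix f g assume "f \<in> nonid C" "g \<in> nonid C" "Cod C f = Dom C g" "u = comp C g f"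
    then show ?thesis
      using comp_composable_nonid_invertible[OF assms(2)] by blast
  qed
qed

end
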